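(* Let $q$ be a power of an odd prime and let $\lambda\in\mathbb{F}_q$ with $\lambda\neq 0,1,-3$. Let $C_\lambda/\mathbb{F}_q$ be the plane quartic $x^4+y^4+z^4=(\lambda+1)(x^2y^2+y^2z^2+z^2x^2)$ and let $E^{(\lambda+3)}_\lambda/\mathbb{F}_q$ be the elliptic curve $(\lambda+3)y^2=x(x-1)(x-\lambda)$. Then $$\#C_\lambda(\mathbb{F}_q)=3\,\#E^{(\lambda+3)}_\lambda(\mathbb{F}_q)-2q-2.$$
   Context: For such $\lambda$, $C_\lambda$ is a smooth, geometrically irreducible plane curve of genus $3$; $\#X(\mathbb{F}_q)$ denotes the number of $\mathbb{F}_q$-rational points (for the quartic, points of the projective plane curve). *)

theory Defs
  imports Main "HOL-Library.Cardinality"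
begin

definition proj_rel :: "('a::field \<times> 'a \<times> 'a) rel" where
  "proj_rel = {(p, p'). p \<noteq> (0,0,0) \<and> p' \<noteq> (0,0,0) \<and>
      (\<exists>c. c \<noteq> 0 \<and> p' = (c * fst p, c * fst (snd p), c * snd (snd p)))}"

definition proj_zeros :: "('a::field \<times> 'a \<times> 'a \<Rightarrow> 'a) \<Rightarrow> ('a \<times> 'a \<times> 'a) set set" where
  "proj_zeros F = {p. p \<noteq> (0,0,0) \<and> F p = 0} // proj_rel"

end

(*
  Write the quartic as Q(x^2, y^2, z^2) with Q(a, b, c) = a^2 + b^2 + c^2 - m (ab + bc + ca),
  m = lam + 1.  Counting square roots with the quadratic character chi, the affine cone of the
  quartic has sum over (a, b, c) of (1 + chi a)(1 + chi b)(1 + chi c) [Q(a, b, c) = 0] points.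
  The constant term counts the affine cone of a smooth conic, q^2 points; the three terms
  chi a chi b, chi b chi c, chi c chi a agree by cyclic symmetry, and solving Q = 0 for c turns
  each of them into (q - 1) times sum_s chi(s D(s)), D the discriminant of Q(1, s, c) in c;
  the odd terms cancel under scaling by a non-square.  The twisted Legendre curve has
  q + 1 + sum_x chi((lam + 3) x (x - 1)(x - lam)) points.  Both character sums become the same
  cubic sum sum_v chi((lam + 3) v (v^2 + 2 (lam + 1) v + (lam - 1)^2)): the first after
  s = v / (lam - 1), the second after grouping x by t = x + lam / x and then shifting t.
*)
theory Submission
  imports Defs "HOL-Number_Theory.Residues"
begin

section \<open>The quadratic character of a finite field\<close>

definition quad_char :: "'a::field \<Rightarrow> int" where
  "quad_char a = (if a = 0 then 0 else if \<exists>u. u^2 = a then 1 else -1)"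

lemma two_neq_zero_if_odd_card:
  assumes "odd CARD('a::{field,finite})"
  shows "(2::'a) \<noteq> 0"
proof
  assume "(2::'a) = 0"
  then have "CHAR('a) dvd 2"
    using of_nat_eq_0_iff_char_dvd[where 'a='a, of 2] by simp
  moreover have "odd CHAR('a)"
    using assms CHAR_dvd_CARD[where 'a='a] dvd_trans by blast
  moreover have "CHAR('a) \<noteq> 1"
    by simp
  ultimately show False
    using dvd_imp_le[of "CHAR('a)" 2] by (auto simp: le_Suc_eq numeral_2_eq_2)
qed

lemma sum_affine_reindex:
  fixes a b :: "'a::{field,finite}"
  assumes "a \<noteq> 0"
  shows "(\<Sum>x\<in>UNIV. h (a*x + b)) = (\<Sum>x\<in>UNIV. h x)"
  by (rule sum.reindex_bij_witness[of UNIV "\<lambda>y. (y - b) / a" "\<lambda>x. a*x + b"]) (use assms in auto)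

lemma sum_scale_reindex:
  fixes a :: "'a::{field,finite}"
  assumes "a \<noteq> 0"
  shows "(\<Sum>x\<in>UNIV. h (a*x)) = (\<Sum>x\<in>UNIV. h x)"
  using sum_affine_reindex[OF assms, of h 0] by simp

lemma sum_inverse_reindex:
  "(\<Sum>x\<in>(UNIV::'a::{field,finite} set). h (inverse x)) = (\<Sum>x\<in>UNIV. h x)"
  by (rule sum.reindex_bij_witness[of UNIV inverse inverse]) auto

lemma sum3_rotate:
  fixes f :: "'a::finite \<Rightarrow> 'a \<Rightarrow> 'a \<Rightarrow> 'b::comm_monoid_add"
  shows "(\<Sum>a\<in>UNIV. \<Sum>b\<in>UNIV. \<Sum>c\<in>UNIV. f b c a) = (\<Sum>a\<in>UNIV. \<Sum>b\<in>UNIV. \<Sum>c\<in>UNIV. f a b c)"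
  by (subst sum.swap) (rule sum.cong[OF refl], rule sum.swap)

lemma sum3_scale_reindex:
  fixes f :: "'a::{field,finite} \<Rightarrow> 'a \<Rightarrow> 'a \<Rightarrow> 'b::comm_monoid_add"
  assumes "t \<noteq> 0"
  shows "(\<Sum>a\<in>UNIV. \<Sum>b\<in>UNIV. \<Sum>c\<in>UNIV. f (t*a) (t*b) (t*c)) = (\<Sum>a\<in>UNIV. \<Sum>b\<in>UNIV. \<Sum>c\<in>UNIV. f a b c)"
proof -
  have "(\<Sum>c\<in>UNIV. f (t*a) (t*b) (t*c)) = (\<Sum>c\<in>UNIV. f (t*a) (t*b) c)" for a b
    by (rule sum_scale_reindex[OF assms])
  moreover have "(\<Sum>b\<in>UNIV. \<Sum>c\<in>UNIV. f (t*a) (t*b) c) = (\<Sum>b\<in>UNIV. \<Sum>c\<in>UNIV. f (t*a) b c)" for a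
    by (rule sum_scale_reindex[OF assms])
  moreover have "(\<Sum>a\<in>UNIV. \<Sum>b\<in>UNIV. \<Sum>c\<in>UNIV. f (t*a) b c) = (\<Sum>a\<in>UNIV. \<Sum>b\<in>UNIV. \<Sum>c\<in>UNIV. f a b c)"
    by (rule sum_scale_reindex[OF assms])
  ultimately show ?thesis
    by simp
qed

lemma quad_char_one [simp]: "quad_char (1::'a::field) = 1"
  unfolding quad_char_def by (metis one_neq_zero power_one)

lemma quad_char_square_mult:
  fixes w a :: "'a::field"
  assumes "w \<noteq> 0"
  shows "quad_char (w^2 * a) = quad_char a"
proof -
  have "(\<exists>u. u^2 = w^2 * a) \<longleftrightarrow> (\<exists>u. u^2 = a)"
  proof
    assume "\<exists>u. u^2 = w^2 * a"
    then obtain u where "u^2 = w^2 * a" by blast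
    then have "(u / w)^2 = a" using assms by (simp add: power_divide)
    then show "\<exists>u. u^2 = a" by blast
  next
    assume "\<exists>u. u^2 = a"
    then obtain u where "u^2 = a" by blast
    then have "(w * u)^2 = w^2 * a" by (simp add: power_mult_distrib)
    then show "\<exists>u. u^2 = w^2 * a" by blast
  qed
  then show ?thesis using assms by (simp add: quad_char_def)
qed

lemma sum_if_zero_const:
  "(\<Sum>x\<in>(UNIV::'a::{field,finite} set). if x = 0 then c else d) = c + (int CARD('a) - 1) * (d::int)"
proof -
  have "(\<Sum>x\<in>(UNIV::'a set). if x = 0 then c else d) = (\<Sum>x\<in>(UNIV::'a set). d + of_bool (x = 0) * (c - d))"
    by (rule sum.cong) auto
  also have "\<dots> = int CARD('a) * d + (c - d)"
    by (simp add: sum.distrib)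
  finally show ?thesis by (simp add: algebra_simps)
qed

context
  assumes two_neq_zero: "(2::'a::{field,finite}) \<noteq> 0"
begin

lemma count_square_roots:
  "(\<Sum>u\<in>UNIV. of_bool (u^2 = a) :: int) = 1 + quad_char (a::'a)"
proof (cases "\<exists>u. u^2 = a")
  case True
  then obtain w where w: "w^2 = a" by blast
  have "{u. u^2 = a} = {w, -w}"
    using w by (auto simp: power2_eq_iff)
  moreover have "w \<noteq> -w" if "a \<noteq> 0"
  proof
    assume "w = -w"
    then have "2 * w = 0" by (metis mult_2 neg_eq_iff_add_eq_0)
    then show False using w that two_neq_zero by simp
  qed
  ultimately show ?thesis using w by (cases "a = 0") (auto simp: quad_char_def)
next
  case False
  then show ?thesis by (auto simp: quad_char_def)
qed

lemma sum_over_squares: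
  "(\<Sum>x\<in>UNIV. g (x^2)) = (\<Sum>a\<in>UNIV. (1 + quad_char (a::'a)) * (g a :: int))"
proof -
  have "(\<Sum>a\<in>UNIV. (1 + quad_char a) * g a) = (\<Sum>a\<in>UNIV. \<Sum>u\<in>UNIV. of_bool (u^2 = (a::'a)) * g a)"
    by (simp add: count_square_roots[symmetric] sum_distrib_right)
  also have "\<dots> = (\<Sum>u\<in>UNIV. \<Sum>a\<in>UNIV. of_bool (u^2 = (a::'a)) * g a)"
    by (rule sum.swap)
  finally show ?thesis by simp
qed

lemma sum_quad_char: "(\<Sum>a\<in>UNIV. quad_char (a::'a)) = 0"
  using sum_over_squares[of "\<lambda>_. 1"] by (simp add: sum.distrib)

lemma sum_quad_char_affine:
  fixes e f :: 'a
  assumes "e \<noteq> 0"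
  shows "(\<Sum>v\<in>UNIV. quad_char (e * v + f)) = 0"
  using sum_affine_reindex[OF assms, of quad_char f] sum_quad_char by simp

lemma nonsquare_mult_nonsquare:
  fixes n m :: 'a
  assumes n: "n \<noteq> 0" "\<nexists>u. u^2 = n" and m: "m \<noteq> 0" "\<nexists>u. u^2 = m"
  shows "\<exists>u. u^2 = n * m"
proof -
  define S where "S = {a::'a. a \<noteq> 0 \<and> (\<exists>u. u^2 = a)}"
  define N where "N = {a::'a. a \<noteq> 0 \<and> (\<nexists>u. u^2 = a)}"
  have "quad_char a = of_bool (a \<in> S) - of_bool (a \<in> N)" for a
    by (simp add: quad_char_def S_def N_def)
  then have "(\<Sum>a\<in>UNIV. quad_char (a::'a)) = int (card S) - int (card N)"
    by (simp add: sum_subtractf)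
  then have "card S = card N"
    using sum_quad_char by simp
  \<comment> \<open>Multiplication by the non-square n maps the squares injectively into the
    non-squares, so by counting it hits every non-square.\<close>
  have "(\<lambda>a. n * a) ` S \<subseteq> N"
  proof
    fix b assume "b \<in> (\<lambda>a. n * a) ` S"
    then obtain w where w: "w \<noteq> 0" "b = n * w^2" unfolding S_def by auto
    have "\<nexists>u. u^2 = b"
    proof
      assume "\<exists>u. u^2 = b"
      then obtain u where "u^2 = n * w^2" using w by blast
      then have "(u / w)^2 = n" using w by (simp add: power_divide)
      then show False using n by blast
    qed
    then show "b \<in> N" using w n unfolding N_def by simp
  qed
  moreover have "card ((\<lambda>a. n * a) ` S) = card N"
    using \<open>card S = card N\<close> n by (simp add: card_image inj_on_def)
  ultimately have "(\<lambda>a. n * a) ` S = N"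
    by (simp add: card_subset_eq)
  moreover have "m \<in> N"
    using m unfolding N_def by simp
  ultimately obtain w where "m = n * w^2"
    unfolding S_def by auto
  then have "(n * w)^2 = n * m"
    by (simp add: power2_eq_square)
  then show ?thesis by blast
qed

lemma quad_char_mult: "quad_char (a * b) = quad_char a * quad_char (b::'a)"
proof -
  have square_case: "quad_char (a * b) = quad_char a * quad_char b"
    if square: "\<exists>w. w^2 = a" for a b :: 'a
  proof (cases "a = 0")
    case False
    obtain w where "w^2 = a" using square by blast
    with False have "w \<noteq> 0" "a = w^2" by auto
    moreover have "quad_char a = 1" using False square by (simp add: quad_char_def)
    ultimately show ?thesis using quad_char_square_mult[of w b] by simp
  qed (simp add: quad_char_def)
  show ?thesis
  proof (cases "(\<exists>w. w^2 = a) \<or> (\<exists>w. w^2 = b)")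
    case True
    then show ?thesis using square_case[of a b] square_case[of b a] by (auto simp: mult.commute)
  next
    case False
    then have "a \<noteq> 0" "b \<noteq> 0" by auto
    then have "\<exists>u. u^2 = a * b" using False nonsquare_mult_nonsquare by blast
    then show ?thesis using False \<open>a \<noteq> 0\<close> \<open>b \<noteq> 0\<close> by (simp add: quad_char_def)
  qed
qed

lemma exists_nonsquare: "\<exists>t::'a. quad_char t = -1"
proof -
  have "\<not> (\<forall>t::'a. 0 \<le> quad_char t)"
  proof
    assume "\<forall>t::'a. 0 \<le> quad_char t"
    then have "\<forall>t::'a. quad_char t = 0"
      using sum_nonneg_eq_0_iff[of "UNIV::'a set" quad_char] sum_quad_char by simp
    then show False
      using quad_char_one by (metis zero_neq_one)
  qed
  then show ?thesis by (auto simp: quad_char_def split: if_splits)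
qed

lemma count_quadratic_roots:
  fixes A B C :: 'a
  assumes "A \<noteq> 0"
  shows "(\<Sum>c\<in>UNIV. of_bool (A*c^2 + B*c + C = 0) :: int) = 1 + quad_char (B^2 - 4*A*C)"
proof -
  have "4 * A \<noteq> 0"
    using assms two_neq_zero by (metis mult_eq_0_iff mult_2_right numeral_Bit0)
  moreover have "(2*A*c + B)^2 - (B^2 - 4*A*C) = (4*A) * (A*c^2 + B*c + C)" for c
    by (simp add: power2_eq_square algebra_simps)
  ultimately have "A*c^2 + B*c + C = 0 \<longleftrightarrow> (2*A*c + B)^2 = B^2 - 4*A*C" for c
    by (metis eq_iff_diff_eq_0 mult_eq_0_iff)
  then have "(\<Sum>c\<in>UNIV. of_bool (A*c^2 + B*c + C = 0) :: int)
      = (\<Sum>c\<in>UNIV. of_bool ((2*A*c + B)^2 = B^2 - 4*A*C))"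
    by simp
  also have "\<dots> = (\<Sum>u\<in>UNIV. of_bool (u^2 = B^2 - 4*A*C))"
    using sum_affine_reindex[of "2*A" "\<lambda>u. of_bool (u^2 = B^2 - 4*A*C) :: int" B]
      two_neq_zero assms by simp
  also have "\<dots> = 1 + quad_char (B^2 - 4*A*C)"
    by (rule count_square_roots)
  finally show ?thesis .
qed

lemma sum_quad_char_square_minus:
  fixes d :: 'a
  assumes "d \<noteq> 0"
  shows "(\<Sum>u\<in>UNIV. quad_char (u^2 - d)) = -1"
proof -
  \<comment> \<open>After substituting v = 1/w, the product v (v - d) becomes a square times 1 - d w.\<close>
  have inverse_step: "quad_char (inverse w * (inverse w - d)) = quad_char ((-d) * w + 1) - of_bool (w = 0)"
    for w :: 'a
  proof (cases "w = 0")
    case False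
    then have "inverse w * (inverse w - d) = (inverse w)^2 * ((-d) * w + 1)"
      by (simp add: power2_eq_square field_simps)
    then show ?thesis using quad_char_square_mult[of "inverse w"] False by simp
  qed (simp add: quad_char_def[of 0])
  have "(\<Sum>u\<in>UNIV. quad_char (u^2 - d)) = (\<Sum>v\<in>UNIV. (1 + quad_char v) * quad_char (v - d))"
    by (rule sum_over_squares)
  also have "\<dots> = (\<Sum>v\<in>UNIV. quad_char (1 * v + (-d))) + (\<Sum>v\<in>UNIV. quad_char (v * (v - d)))"
    by (simp add: distrib_right sum.distrib quad_char_mult)
  also have "(\<Sum>v\<in>UNIV. quad_char (v * (v - d))) = (\<Sum>w\<in>UNIV. quad_char (inverse w * (inverse w - d)))"
    by (rule sum_inverse_reindex[symmetric])
  also have "\<dots> = (\<Sum>w\<in>UNIV. quad_char ((-d) * w + 1)) - 1"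
    by (simp only: inverse_step sum_subtractf) simp
  also have "(\<Sum>v\<in>UNIV. quad_char (1 * v + (-d))) = 0"
    by (simp only: sum_quad_char_affine one_neq_zero not_False_eq_True)
  also have "(\<Sum>w\<in>UNIV. quad_char ((-d) * w + 1)) = 0"
    using assms by (simp only: sum_quad_char_affine neg_equal_0_iff_equal not_False_eq_True)
  finally show ?thesis by simp
qed

lemma sum_quad_char_quadratic:
  fixes A B C :: 'a
  assumes "A \<noteq> 0" and "B^2 - 4*A*C \<noteq> 0"
  shows "(\<Sum>s\<in>UNIV. quad_char (A*s^2 + B*s + C)) = - quad_char A"
proof -
  have "quad_char (4::'a) = 1"
    using quad_char_square_mult[of 2 1] two_neq_zero by simp
  then have "quad_char A * (\<Sum>s\<in>UNIV. quad_char (A*s^2 + B*s + C))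
      = (\<Sum>s\<in>UNIV. quad_char (4 * (A * (A*s^2 + B*s + C))))"
    by (simp add: sum_distrib_left quad_char_mult)
  also have "\<dots> = (\<Sum>s\<in>UNIV. quad_char ((2*A*s + B)^2 - (B^2 - 4*A*C)))"
    by (rule sum.cong) (simp_all add: power2_eq_square algebra_simps)
  also have "\<dots> = (\<Sum>u\<in>UNIV. quad_char (u^2 - (B^2 - 4*A*C)))"
    using sum_affine_reindex[of "2*A" "\<lambda>u. quad_char (u^2 - (B^2 - 4*A*C))" B]
      two_neq_zero assms(1) by simp
  also have "\<dots> = -1"
    using assms(2) by (rule sum_quad_char_square_minus)
  finally have "quad_char A * (\<Sum>s\<in>UNIV. quad_char (A*s^2 + B*s + C)) = -1" .
  then have "quad_char A * quad_char A * (\<Sum>s\<in>UNIV. quad_char (A*s^2 + B*s + C)) = - quad_char A"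
    by (simp add: mult.assoc)
  moreover have "quad_char A * quad_char A = 1"
    using assms(1) by (auto simp: quad_char_def)
  ultimately show ?thesis
    by simp
qed

end

section \<open>Counting points of projective plane curves\<close>

lemma proj_rel_equiv: "equiv {p::'a::field \<times> 'a \<times> 'a. p \<noteq> (0,0,0)} proj_rel"
proof (rule equivI)
  show "refl_on {p::'a \<times> 'a \<times> 'a. p \<noteq> (0,0,0)} proj_rel"
    unfolding refl_on_def proj_rel_def by (auto intro!: exI[of _ 1])
  show "sym (proj_rel :: (('a \<times> 'a \<times> 'a) \<times> _) set)"
  proof (rule symI)
    fix p p' :: "'a \<times> 'a \<times> 'a"
    assume "(p, p') \<in> proj_rel"
    then obtain c where "c \<noteq> 0" "p' = (c * fst p, c * fst (snd p), c * snd (snd p))"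
      and "p \<noteq> (0,0,0)" "p' \<noteq> (0,0,0)"
      unfolding proj_rel_def by blast
    then show "(p', p) \<in> proj_rel"
      unfolding proj_rel_def by (cases p) (auto intro!: exI[of _ "inverse c"])
  qed
  show "trans (proj_rel :: (('a \<times> 'a \<times> 'a) \<times> _) set)"
  proof (rule transI)
    fix p p' p'' :: "'a \<times> 'a \<times> 'a"
    assume "(p, p') \<in> proj_rel" "(p', p'') \<in> proj_rel"
    then obtain c d where "c \<noteq> 0" "p' = (c * fst p, c * fst (snd p), c * snd (snd p))"
      and "d \<noteq> 0" "p'' = (d * fst p', d * fst (snd p'), d * snd (snd p'))"
      and "p \<noteq> (0,0,0)" "p'' \<noteq> (0,0,0)"
      unfolding proj_rel_def by blast
    then show "(p, p'') \<in> proj_rel"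
      unfolding proj_rel_def by (auto simp: mult.assoc intro!: exI[of _ "d * c"])
  qed
qed (auto simp: proj_rel_def)

lemma proj_class_eq_scalings:
  fixes p :: "'a::field \<times> 'a \<times> 'a"
  assumes "p \<noteq> (0,0,0)"
  shows "proj_rel `` {p} = (\<lambda>c. (c * fst p, c * fst (snd p), c * snd (snd p))) ` (UNIV - {0})"
  using assms unfolding proj_rel_def by (cases p) auto

lemma card_proj_class:
  fixes p :: "'a::{field,finite} \<times> 'a \<times> 'a"
  assumes "p \<noteq> (0,0,0)"
  shows "card (proj_rel `` {p}) = CARD('a) - 1"
proof -
  have "inj_on (\<lambda>c. (c * fst p, c * fst (snd p), c * snd (snd p))) (UNIV - {0})"
    using assms by (cases p) (auto intro!: inj_onI)
  then show ?thesis
    by (simp add: proj_class_eq_scalings[OF assms] card_image card_Diff_subset)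
qed

lemma card_proj_zeros_mult:
  fixes F :: "'a::{field,finite} \<times> 'a \<times> 'a \<Rightarrow> 'a"
  assumes hom: "\<And>c x y z. c \<noteq> 0 \<Longrightarrow> F (c*x, c*y, c*z) = 0 \<longleftrightarrow> F (x,y,z) = 0"
  shows "card (proj_zeros F) * (CARD('a) - 1) = card {p. p \<noteq> (0,0,0) \<and> F p = 0}"
proof -
  define Z where "Z = {p. p \<noteq> (0,0,0) \<and> F p = 0}"
  have classes_in_Z: "proj_rel `` {p} \<subseteq> Z" if "p \<in> Z" for p
    using that hom unfolding Z_def by (cases p) (auto simp: proj_class_eq_scalings)
  have union: "\<Union> (Z // proj_rel) = Z"
  proof
    show "\<Union> (Z // proj_rel) \<subseteq> Z"
      using classes_in_Z by (auto elim!: quotientE)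
    show "Z \<subseteq> \<Union> (Z // proj_rel)"
    proof
      fix p assume "p \<in> Z"
      then have "p \<in> proj_rel `` {p}"
        by (intro equiv_class_self[OF proj_rel_equiv]) (simp add: Z_def)
      then show "p \<in> \<Union> (Z // proj_rel)"
        using \<open>p \<in> Z\<close> by (auto intro: quotientI)
    qed
  qed
  have "card X = CARD('a) - 1" if "X \<in> Z // proj_rel" for X
    using that card_proj_class unfolding Z_def by (metis (mono_tags) mem_Collect_eq quotientE)
  moreover have "X = Y \<or> X \<inter> Y = {}" if "X \<in> Z // proj_rel" "Y \<in> Z // proj_rel" for X Y
  proof -
    have "Z // proj_rel \<subseteq> {p. p \<noteq> (0,0,0)} // proj_rel"
      unfolding Z_def quotient_def by blast
    then show ?thesis
      using that quotient_disj[OF proj_rel_equiv] by blast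
  qed
  ultimately have "(CARD('a) - 1) * card (Z // proj_rel) = card Z"
    using card_partition[of "Z // proj_rel" "CARD('a) - 1"] union by auto
  then show ?thesis
    unfolding proj_zeros_def Z_def by (simp add: mult.commute)
qed

lemma card_proj_zeros_eq:
  fixes F :: "'a::{field,finite} \<times> 'a \<times> 'a \<Rightarrow> 'a"
  assumes hom: "\<And>c x y z. c \<noteq> 0 \<Longrightarrow> F (c*x, c*y, c*z) = 0 \<longleftrightarrow> F (x,y,z) = 0"
    and "F (0,0,0) = 0"
    and cone: "int (card {p. F p = 0}) = 1 + (int CARD('a) - 1) * N"
  shows "int (card (proj_zeros F)) = N"
proof -
  have "{p. F p = 0} = insert (0,0,0) {p. p \<noteq> (0,0,0) \<and> F p = 0}"
    using assms(2) by auto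
  then have "int (card {p. p \<noteq> (0,0,0) \<and> F p = 0}) = (int CARD('a) - 1) * N"
    using cone by simp
  moreover have "CARD('a) \<ge> 2"
    using card_mono[of UNIV "{0::'a, 1}"] by simp
  ultimately have "int (card (proj_zeros F)) * (int CARD('a) - 1) = (int CARD('a) - 1) * N"
    using card_proj_zeros_mult[OF hom] by (metis of_nat_1 of_nat_diff of_nat_mult one_le_numeral order_trans)
  then show ?thesis
    using \<open>CARD('a) \<ge> 2\<close> by simp
qed

lemma card_triples_eq_sum:
  "int (card {p::'a::finite \<times> 'b::finite \<times> 'c::finite. P p})
    = (\<Sum>x\<in>UNIV. \<Sum>y\<in>UNIV. \<Sum>z\<in>UNIV. of_bool (P (x,y,z)))"
proof -
  have "int (card {p. P p}) = (\<Sum>p\<in>UNIV \<times> UNIV \<times> UNIV. of_bool (P p))"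
    by (simp only: UNIV_Times_UNIV) simp
  also have "\<dots> = (\<Sum>x\<in>UNIV. \<Sum>yz\<in>UNIV \<times> UNIV. of_bool (P (x, yz)))"
    by (subst sum.cartesian_product) simp
  also have "\<dots> = (\<Sum>x\<in>UNIV. \<Sum>y\<in>UNIV. \<Sum>z\<in>UNIV. of_bool (P (x,y,z)))"
    by (subst sum.cartesian_product) simp
  finally show ?thesis .
qed

section \<open>The quartic\<close>

definition sym_quad_form :: "'a::field \<Rightarrow> 'a \<Rightarrow> 'a \<Rightarrow> 'a \<Rightarrow> 'a" where
  "sym_quad_form m a b c = a^2 + b^2 + c^2 - m * (a*b + b*c + c*a)"

text \<open>The discriminant of sym_quad_form m a b c as a quadratic polynomial in c.\<close>
definition sym_quad_form_disc :: "'a::field \<Rightarrow> 'a \<Rightarrow> 'a \<Rightarrow> 'a" where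
  "sym_quad_form_disc m a b = m^2 * (a + b)^2 - 4 * (a^2 + b^2 - m*a*b)"

definition disc_char_sum :: "'a::{field,finite} \<Rightarrow> int" where
  "disc_char_sum m = (\<Sum>s\<in>UNIV. quad_char (s * sym_quad_form_disc m 1 s))"

lemma sym_quad_form_rotate: "sym_quad_form m b c a = sym_quad_form m a b c"
  by (simp add: sym_quad_form_def algebra_simps)

lemma sym_quad_form_scale: "sym_quad_form m (t*a) (t*b) (t*c) = t^2 * sym_quad_form m a b c"
  by (simp add: sym_quad_form_def power2_eq_square algebra_simps)

lemma sym_quad_form_disc_scale: "sym_quad_form_disc m a (a*s) = a^2 * sym_quad_form_disc m 1 s"
  by (simp add: sym_quad_form_disc_def power2_eq_square algebra_simps)

lemma sym_quad_form_disc_zero: "sym_quad_form_disc m 0 b = (m^2 - 4) * b^2"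
  by (simp add: sym_quad_form_disc_def power2_eq_square algebra_simps)

lemma sym_quad_form_disc_one:
  "sym_quad_form_disc m 1 s = (m^2 - 4) * s^2 + (2*m^2 + 4*m) * s + (m^2 - 4)"
  by (simp add: sym_quad_form_disc_def power2_eq_square algebra_simps)

context
  assumes two_neq_zero: "(2::'a::{field,finite}) \<noteq> 0"
begin

lemma count_sym_quad_form_roots:
  "(\<Sum>c\<in>UNIV. of_bool (sym_quad_form m a b c = 0) :: int) = 1 + quad_char (sym_quad_form_disc m a (b::'a))"
proof -
  have "sym_quad_form m a b c = 1*c^2 + (- m*(a + b))*c + (a^2 + b^2 - m*a*b)" for c
    by (simp add: sym_quad_form_def power2_eq_square algebra_simps)
  moreover have "(- m*(a + b))^2 - 4*1*(a^2 + b^2 - m*a*b) = sym_quad_form_disc m a b"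
    by (simp add: sym_quad_form_disc_def power2_eq_square algebra_simps)
  ultimately show ?thesis
    using count_quadratic_roots[OF two_neq_zero, of 1 "- m*(a + b)" "a^2 + b^2 - m*a*b"] by simp
qed

lemma count_sym_quad_form_zeros:
  fixes m :: 'a
  assumes "m \<noteq> 1" "m \<noteq> 2" "m \<noteq> -2"
  shows "(\<Sum>a\<in>UNIV. \<Sum>b\<in>UNIV. \<Sum>c\<in>UNIV. of_bool (sym_quad_form m a b c = 0) :: int) = int CARD('a) ^ 2"
proof -
  have "m^2 - 4 = (m - 2) * (m + 2)"
    by (simp add: power2_eq_square algebra_simps)
  then have lead: "m^2 - 4 \<noteq> 0"
    using assms by (simp add: eq_neg_iff_add_eq_0)
  have "(2*m^2 + 4*m)^2 - 4*(m^2 - 4)*(m^2 - 4) = 2^4 * ((m + 2)^2 * (m - 1))"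
    by (simp add: power2_eq_square algebra_simps)
  then have disc: "(2*m^2 + 4*m)^2 - 4*(m^2 - 4)*(m^2 - 4) \<noteq> 0"
    using assms power_not_zero[OF two_neq_zero, of 4] by (simp add: eq_neg_iff_add_eq_0)
  have row: "(\<Sum>b\<in>UNIV. quad_char (sym_quad_form_disc m a b))
      = (if a = 0 then (int CARD('a) - 1) * quad_char (m^2 - 4) else - quad_char (m^2 - 4))" for a
  proof (cases "a = 0")
    case True
    have "quad_char (sym_quad_form_disc m 0 b) = (if b = 0 then 0 else quad_char (m^2 - 4))" for b
      using quad_char_square_mult[of b "m^2 - 4"]
      by (simp add: sym_quad_form_disc_zero mult.commute quad_char_def[of 0])
    then show ?thesis
      using True by (simp add: sum_if_zero_const)
  next
    case False
    have "(\<Sum>b\<in>UNIV. quad_char (sym_quad_form_disc m a b)) = (\<Sum>s\<in>UNIV. quad_char (sym_quad_form_disc m a (a*s)))"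
      by (rule sum_scale_reindex[OF False, symmetric])
    also have "\<dots> = (\<Sum>s\<in>UNIV. quad_char ((m^2 - 4) * s^2 + (2*m^2 + 4*m) * s + (m^2 - 4)))"
      by (simp add: sym_quad_form_disc_scale quad_char_square_mult[OF False] sym_quad_form_disc_one)
    also have "\<dots> = - quad_char (m^2 - 4)"
      using disc by (intro sum_quad_char_quadratic[OF two_neq_zero lead]) simp
    finally show ?thesis
      using False by simp
  qed
  have "(\<Sum>a\<in>UNIV. \<Sum>b\<in>UNIV. \<Sum>c\<in>UNIV. of_bool (sym_quad_form m a b c = 0) :: int)
      = (\<Sum>a\<in>UNIV. \<Sum>b\<in>UNIV. 1 + quad_char (sym_quad_form_disc m a b))"
    by (simp add: count_sym_quad_form_roots)
  also have "\<dots> = (\<Sum>a::'a\<in>UNIV. int CARD('a)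
      + (if a = 0 then (int CARD('a) - 1) * quad_char (m^2 - 4) else - quad_char (m^2 - 4)))"
    by (simp add: sum.distrib row)
  also have "\<dots> = int CARD('a) * int CARD('a)"
    by (simp add: sum.distrib sum_if_zero_const algebra_simps)
  finally show ?thesis
    by (simp add: power2_eq_square)
qed

lemma sum_sym_quad_form_zeros_char_pair:
  "(\<Sum>a\<in>UNIV. \<Sum>b\<in>UNIV. \<Sum>c\<in>UNIV. of_bool (sym_quad_form m a b c = 0) * (quad_char a * quad_char b))
    = (int CARD('a) - 1) * disc_char_sum (m::'a)"
proof -
  have row: "(\<Sum>b\<in>UNIV. quad_char (a * b * sym_quad_form_disc m a b)) = (if a = 0 then 0 else disc_char_sum m)"
    for a
  proof (cases "a = 0")
    case False
    have "quad_char (a * (a*s) * sym_quad_form_disc m a (a*s)) = quad_char (s * sym_quad_form_disc m 1 s)" for s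
    proof -
      have "a * (a*s) * sym_quad_form_disc m a (a*s) = (a^2)^2 * (s * sym_quad_form_disc m 1 s)"
        by (simp add: sym_quad_form_disc_scale power2_eq_square algebra_simps)
      moreover have "quad_char ((a^2)^2 * (s * sym_quad_form_disc m 1 s)) = quad_char (s * sym_quad_form_disc m 1 s)"
        using False by (intro quad_char_square_mult) simp
      ultimately show ?thesis
        by (simp only:)
    qed
    then have "(\<Sum>s\<in>UNIV. quad_char (a * (a*s) * sym_quad_form_disc m a (a*s))) = disc_char_sum m"
      by (simp add: disc_char_sum_def)
    then show ?thesis
      using False sum_scale_reindex[OF False, of "\<lambda>b. quad_char (a * b * sym_quad_form_disc m a b)"] by simp
  qed (simp add: quad_char_def)
  have "(\<Sum>c\<in>UNIV. of_bool (sym_quad_form m a b c = 0) * (quad_char a * quad_char b))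
      = (quad_char a * quad_char b) * (1 + quad_char (sym_quad_form_disc m a b))" for a b
    unfolding sum_distrib_right[symmetric] count_sym_quad_form_roots by (rule mult.commute)
  then have "(\<Sum>a\<in>UNIV. \<Sum>b\<in>UNIV. \<Sum>c\<in>UNIV. of_bool (sym_quad_form m a b c = 0) * (quad_char a * quad_char b))
      = (\<Sum>a::'a\<in>UNIV. \<Sum>b::'a\<in>UNIV. quad_char a * quad_char b)
        + (\<Sum>a\<in>UNIV. \<Sum>b\<in>UNIV. quad_char (a * b * sym_quad_form_disc m a b))"
    by (simp add: distrib_left sum.distrib quad_char_mult[OF two_neq_zero])
  also have "(\<Sum>a::'a\<in>UNIV. \<Sum>b::'a\<in>UNIV. quad_char a * quad_char b) = 0"
    by (simp add: sum_distrib_left[symmetric] sum_quad_char[OF two_neq_zero])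
  finally show ?thesis
    by (simp add: row sum_if_zero_const)
qed

text \<open>Scaling (a, b, c) by a non-square t fixes the zero set of the form and flips the sign of
  every odd character monomial.\<close>
lemma sum_sym_quad_form_zeros_odd_part:
  "(\<Sum>a\<in>UNIV. \<Sum>b\<in>UNIV. \<Sum>c\<in>UNIV. of_bool (sym_quad_form m a b c = 0) *
      (quad_char a + quad_char b + quad_char c + quad_char a * quad_char b * quad_char (c::'a))) = 0"
  (is "(\<Sum>a\<in>UNIV. \<Sum>b\<in>UNIV. \<Sum>c\<in>UNIV. ?f a b c) = 0")
proof -
  obtain t :: 'a where t: "quad_char t = -1"
    using exists_nonsquare[OF two_neq_zero] by blast
  then have "t \<noteq> 0"
    by (auto simp: quad_char_def)
  then have "sym_quad_form m (t*a) (t*b) (t*c) = 0 \<longleftrightarrow> sym_quad_form m a b c = 0" for a b c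
    by (simp add: sym_quad_form_scale)
  then have "?f (t*a) (t*b) (t*c) = - ?f a b c" for a b c
    using t by (simp add: quad_char_mult[OF two_neq_zero] algebra_simps)
  then have "(\<Sum>a\<in>UNIV. \<Sum>b\<in>UNIV. \<Sum>c\<in>UNIV. ?f a b c) = - (\<Sum>a\<in>UNIV. \<Sum>b\<in>UNIV. \<Sum>c\<in>UNIV. ?f a b c)"
    using sum3_scale_reindex[OF \<open>t \<noteq> 0\<close>, of ?f] by (simp add: sum_negf)
  then show ?thesis
    by simp
qed

lemma sum3_over_squares:
  fixes g :: "'a \<Rightarrow> 'a \<Rightarrow> 'a \<Rightarrow> int"
  shows "(\<Sum>x\<in>UNIV. \<Sum>y\<in>UNIV. \<Sum>z\<in>UNIV. g (x^2) (y^2) (z^2))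
    = (\<Sum>a\<in>UNIV. \<Sum>b\<in>UNIV. \<Sum>c\<in>UNIV.
        (1 + quad_char a) * (1 + quad_char b) * (1 + quad_char c) * g a b c)"
proof -
  have "(\<Sum>x\<in>UNIV. \<Sum>y\<in>UNIV. \<Sum>z\<in>UNIV. g (x^2) (y^2) (z^2))
      = (\<Sum>x\<in>UNIV. \<Sum>y\<in>UNIV. \<Sum>c\<in>UNIV. (1 + quad_char c) * g (x^2) (y^2) c)"
    by (simp add: sum_over_squares[OF two_neq_zero])
  also have "\<dots> = (\<Sum>x\<in>UNIV. \<Sum>b\<in>UNIV. (1 + quad_char b) * (\<Sum>c\<in>UNIV. (1 + quad_char c) * g (x^2) b c))"
    by (rule sum.cong[OF refl], rule sum_over_squares[OF two_neq_zero])
  also have "\<dots> = (\<Sum>a\<in>UNIV. (1 + quad_char a) *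
      (\<Sum>b\<in>UNIV. (1 + quad_char b) * (\<Sum>c\<in>UNIV. (1 + quad_char c) * g a b c)))"
    by (rule sum_over_squares[OF two_neq_zero])
  finally show ?thesis
    by (simp add: sum_distrib_left mult.assoc)
qed

lemma count_sym_quad_form_square_zeros:
  fixes m :: 'a
  assumes "m \<noteq> 1" "m \<noteq> 2" "m \<noteq> -2"
  shows "(\<Sum>x\<in>UNIV. \<Sum>y\<in>UNIV. \<Sum>z\<in>UNIV. of_bool (sym_quad_form m (x^2) (y^2) (z^2) = 0))
    = int CARD('a)^2 + 3 * ((int CARD('a) - 1) * disc_char_sum m)"
proof -
  define G where "G a b c = (of_bool (sym_quad_form m a b c = 0) :: int)" for a b c :: 'a
  define P where "P a b c = G a b c * (quad_char a * quad_char b)" for a b c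
  have expand: "(1 + quad_char a) * (1 + quad_char b) * (1 + quad_char c) * G a b c
      = G a b c + P a b c + P b c a + P c a b
        + G a b c * (quad_char a + quad_char b + quad_char c + quad_char a * quad_char b * quad_char c)"
    for a b c
  proof -
    have "P b c a = G a b c * (quad_char b * quad_char c)"
      "P c a b = G a b c * (quad_char c * quad_char a)"
      by (simp_all add: P_def G_def sym_quad_form_rotate)
    then show ?thesis
      by (simp only:) (simp add: P_def algebra_simps)
  qed
  have "(\<Sum>x\<in>UNIV. \<Sum>y\<in>UNIV. \<Sum>z\<in>UNIV. of_bool (sym_quad_form m (x^2) (y^2) (z^2) = 0))
      = (\<Sum>x\<in>UNIV. \<Sum>y\<in>UNIV. \<Sum>z\<in>UNIV. G (x^2) (y^2) (z^2))"
    unfolding G_def by (rule refl)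
  also have "\<dots> = (\<Sum>a\<in>UNIV. \<Sum>b\<in>UNIV. \<Sum>c\<in>UNIV.
      (1 + quad_char a) * (1 + quad_char b) * (1 + quad_char c) * G a b c)"
    by (rule sum3_over_squares)
  also have "\<dots> = (\<Sum>a\<in>UNIV. \<Sum>b\<in>UNIV. \<Sum>c\<in>UNIV. G a b c)
      + (\<Sum>a\<in>UNIV. \<Sum>b\<in>UNIV. \<Sum>c\<in>UNIV. P a b c)
      + (\<Sum>a\<in>UNIV. \<Sum>b\<in>UNIV. \<Sum>c\<in>UNIV. P b c a)
      + (\<Sum>a\<in>UNIV. \<Sum>b\<in>UNIV. \<Sum>c\<in>UNIV. P c a b)
      + (\<Sum>a\<in>UNIV. \<Sum>b\<in>UNIV. \<Sum>c\<in>UNIV. G a b c *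
          (quad_char a + quad_char b + quad_char c + quad_char a * quad_char b * quad_char c))"
    by (simp only: expand sum.distrib)
  also have "(\<Sum>a\<in>UNIV. \<Sum>b\<in>UNIV. \<Sum>c\<in>UNIV. G a b c *
      (quad_char a + quad_char b + quad_char c + quad_char a * quad_char b * quad_char c)) = 0"
    unfolding G_def by (rule sum_sym_quad_form_zeros_odd_part)
  also have "(\<Sum>a\<in>UNIV. \<Sum>b\<in>UNIV. \<Sum>c\<in>UNIV. P c a b) = (\<Sum>a\<in>UNIV. \<Sum>b\<in>UNIV. \<Sum>c\<in>UNIV. P b c a)"
    by (rule sum3_rotate)
  also have "(\<Sum>a\<in>UNIV. \<Sum>b\<in>UNIV. \<Sum>c\<in>UNIV. P b c a) = (\<Sum>a\<in>UNIV. \<Sum>b\<in>UNIV. \<Sum>c\<in>UNIV. P a b c)"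
    by (rule sum3_rotate)
  also have "(\<Sum>a\<in>UNIV. \<Sum>b\<in>UNIV. \<Sum>c\<in>UNIV. P a b c) = (int CARD('a) - 1) * disc_char_sum m"
    unfolding P_def G_def by (rule sum_sym_quad_form_zeros_char_pair)
  also have "(\<Sum>a\<in>UNIV. \<Sum>b\<in>UNIV. \<Sum>c\<in>UNIV. G a b c) = int CARD('a) ^ 2"
    unfolding G_def by (rule count_sym_quad_form_zeros[OF assms])
  finally show ?thesis
    by simp
qed

lemma card_proj_quartic:
  fixes m :: 'a
  assumes "m \<noteq> 1" "m \<noteq> 2" "m \<noteq> -2"
  shows "int (card (proj_zeros (\<lambda>(x,y,z). x^4 + y^4 + z^4 - m * (x^2*y^2 + y^2*z^2 + z^2*x^2))))
    = int CARD('a) + 1 + 3 * disc_char_sum m"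
    (is "int (card (proj_zeros ?F)) = _")
proof (rule card_proj_zeros_eq)
  fix c x y z :: 'a
  assume "c \<noteq> 0"
  have "?F (c*x, c*y, c*z) = c^4 * ?F (x, y, z)"
    by (simp add: power_mult_distrib algebra_simps flip: power_add)
  then show "?F (c*x, c*y, c*z) = 0 \<longleftrightarrow> ?F (x, y, z) = 0"
    using \<open>c \<noteq> 0\<close> by simp
next
  have "?F (x, y, z) = sym_quad_form m (x^2) (y^2) (z^2)" for x y z
    by (simp add: sym_quad_form_def power2_eq_square power4_eq_xxxx algebra_simps)
  then have "int (card {p. ?F p = 0}) = int CARD('a)^2 + 3 * ((int CARD('a) - 1) * disc_char_sum m)"
    unfolding card_triples_eq_sum using count_sym_quad_form_square_zeros[OF assms] by simp
  then show "int (card {p. ?F p = 0}) = 1 + (int CARD('a) - 1) * (int CARD('a) + 1 + 3 * disc_char_sum m)"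
    by (simp add: power2_eq_square algebra_simps)
qed simp

end

section \<open>The twisted Legendre curve\<close>

definition legendre_char_sum :: "'a::{field,finite} \<Rightarrow> 'a \<Rightarrow> int" where
  "legendre_char_sum k lam = (\<Sum>x\<in>UNIV. quad_char (k * (x * (x - 1) * (x - lam))))"

lemma disc_char_sum_eq_cubic_sum:
  fixes lam :: "'a::{field,finite}"
  assumes "lam \<noteq> 1"
  shows "disc_char_sum (lam + 1)
    = (\<Sum>v\<in>UNIV. quad_char ((lam + 3) * (v * (v^2 + 2*(lam + 1)*v + (lam - 1)^2))))"
proof -
  define e where "e = inverse (lam - 1)"
  have "e \<noteq> 0" "e * (lam - 1) = 1"
    using assms by (simp_all add: e_def)
  have "(e*v) * sym_quad_form_disc (lam + 1) 1 (e*v) - e^2 * ((lam + 3) * (v * (v^2 + 2*(lam + 1)*v + (lam - 1)^2)))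
      = (e * (lam - 1) - 1) * ((lam + 3) * e * v * (e * v^2 - (lam - 1)))" for v
    by (simp add: sym_quad_form_disc_def power2_eq_square algebra_simps)
  then have rescaled: "(e*v) * sym_quad_form_disc (lam + 1) 1 (e*v)
      = e^2 * ((lam + 3) * (v * (v^2 + 2*(lam + 1)*v + (lam - 1)^2)))" for v
    using \<open>e * (lam - 1) = 1\<close> by simp
  have pointwise: "quad_char ((e*v) * sym_quad_form_disc (lam + 1) 1 (e*v))
      = quad_char ((lam + 3) * (v * (v^2 + 2*(lam + 1)*v + (lam - 1)^2)))" for v
    unfolding rescaled by (rule quad_char_square_mult[OF \<open>e \<noteq> 0\<close>])
  have "disc_char_sum (lam + 1) = (\<Sum>v\<in>UNIV. quad_char ((e*v) * sym_quad_form_disc (lam + 1) 1 (e*v)))"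
    unfolding disc_char_sum_def by (rule sum_scale_reindex[OF \<open>e \<noteq> 0\<close>, symmetric])
  then show ?thesis
    by (simp only: pointwise)
qed

context
  assumes two_neq_zero: "(2::'a::{field,finite}) \<noteq> 0"
begin

lemma count_solutions_x_plus_div_x:
  fixes lam t :: 'a
  assumes "lam \<noteq> 0"
  shows "(\<Sum>x\<in>UNIV. of_bool (x \<noteq> 0 \<and> x + lam / x = t) :: int) = 1 + quad_char (t^2 - 4*lam)"
proof -
  have "(x \<noteq> 0 \<and> x + lam / x = t) \<longleftrightarrow> 1*x^2 + (-t)*x + lam = 0" for x
  proof (cases "x = 0")
    case False
    then have "x + lam / x = t \<longleftrightarrow> x^2 + lam = t * x"
      by (simp add: field_simps power2_eq_square)
    then show ?thesis
      using False by (auto simp: algebra_simps)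
  qed (simp add: assms)
  then show ?thesis
    using count_quadratic_roots[OF two_neq_zero, of 1 "-t" lam] by simp
qed

lemma legendre_char_sum_eq_cubic_sum:
  fixes k lam :: 'a
  assumes "k \<noteq> 0" "lam \<noteq> 0"
  shows "legendre_char_sum k lam
    = (\<Sum>v\<in>UNIV. quad_char (k * (v * (v^2 + 2*(lam + 1)*v + (lam - 1)^2))))"
proof -
  define g where "g t = quad_char (k * (t - (lam + 1)))" for t
  \<comment> \<open>For x \<noteq> 0 the cubic is x^2 times an affine function of x + lam / x; the latter takes
    each value t exactly 1 + quad_char (t^2 - 4 lam) times.\<close>
  have "quad_char (k * (x * (x - 1) * (x - lam))) = (if x = 0 then 0 else g (x + lam / x))" for x
  proof (cases "x = 0")
    case False
    then have "k * (x * (x - 1) * (x - lam)) = x^2 * (k * ((x + lam / x) - (lam + 1)))"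
      by (simp add: field_simps power2_eq_square)
    then show ?thesis
      using False by (simp only: quad_char_square_mult[OF False] g_def if_False)
  qed (simp add: quad_char_def)
  then have "legendre_char_sum k lam = (\<Sum>x\<in>UNIV. if x = 0 then 0 else g (x + lam / x))"
    by (simp add: legendre_char_sum_def)
  also have "\<dots> = (\<Sum>x\<in>UNIV. \<Sum>t\<in>UNIV. of_bool (x \<noteq> 0 \<and> x + lam / x = t) * g t)"
    by (rule sum.cong[OF refl]) simp
  also have "\<dots> = (\<Sum>t\<in>UNIV. \<Sum>x\<in>UNIV. of_bool (x \<noteq> 0 \<and> x + lam / x = t) * g t)"
    by (rule sum.swap)
  also have "\<dots> = (\<Sum>t\<in>UNIV. (1 + quad_char (t^2 - 4*lam)) * g t)"
    unfolding sum_distrib_right[symmetric] count_solutions_x_plus_div_x[OF assms(2)] ..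
  also have "\<dots> = (\<Sum>t\<in>UNIV. g t) + (\<Sum>t\<in>UNIV. quad_char (k * (t - (lam + 1)) * (t^2 - 4*lam)))"
    by (simp add: g_def distrib_left distrib_right sum.distrib quad_char_mult[OF two_neq_zero] mult_ac)
  also have "(\<Sum>t\<in>UNIV. g t) = 0"
  proof -
    have "g t = quad_char (k * t + - (k * (lam + 1)))" for t
      by (simp add: g_def algebra_simps)
    then show ?thesis
      using sum_quad_char_affine[OF two_neq_zero assms(1)] by (simp only:)
  qed
  also have "(\<Sum>t\<in>UNIV. quad_char (k * (t - (lam + 1)) * (t^2 - 4*lam)))
      = (\<Sum>v\<in>UNIV. quad_char (k * ((1*v + (lam + 1)) - (lam + 1)) * ((1*v + (lam + 1))^2 - 4*lam)))"
    by (rule sum_affine_reindex[symmetric]) simp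
  finally show ?thesis
    by (simp add: power2_eq_square algebra_simps)
qed

lemma count_twisted_legendre_cone:
  fixes k lam :: 'a
  assumes "k \<noteq> 0"
  shows "(\<Sum>x\<in>UNIV. \<Sum>y\<in>UNIV. \<Sum>z\<in>UNIV. of_bool (k * y^2 * z - x * (x - z) * (x - lam * z) = 0))
    = 1 + (int CARD('a) - 1) * (int CARD('a) + 1 + legendre_char_sum k lam)"
proof -
  define f where "f x y z = (of_bool (k * y^2 * z - x * (x - z) * (x - lam * z) = 0) :: int)" for x y z :: 'a
  have plane: "(\<Sum>x\<in>UNIV. \<Sum>y\<in>UNIV. f x y z)
      = (if z = 0 then int CARD('a) else int CARD('a) + legendre_char_sum k lam)" for z
  proof (cases "z = 0")
    case True
    then have "f x y z = of_bool (x = 0)" for x y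
      by (simp add: f_def)
    then show ?thesis
      using True by simp
  next
    case False
    have "(\<Sum>x\<in>UNIV. \<Sum>y\<in>UNIV. f x y z) = (\<Sum>u\<in>UNIV. \<Sum>v\<in>UNIV. f (z*u) (z*v) z)"
      by (simp add: sum_scale_reindex[OF False, of "\<lambda>x. \<Sum>y\<in>UNIV. f x y z"]
          sum_scale_reindex[OF False, of "\<lambda>y. f _ y z"])
    also have "\<dots> = (\<Sum>u\<in>UNIV. \<Sum>v\<in>UNIV. of_bool (k*v^2 + 0*v + (- (u*(u - 1)*(u - lam))) = 0))"
    proof (intro sum.cong refl)
      fix u v :: 'a
      have "k * (z*v)^2 * z - (z*u) * (z*u - z) * (z*u - lam * z)
          = z^3 * (k*v^2 + 0*v + (- (u*(u - 1)*(u - lam))))"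
        by (simp add: power2_eq_square power3_eq_cube algebra_simps)
      then show "f (z*u) (z*v) z = of_bool (k*v^2 + 0*v + (- (u*(u - 1)*(u - lam))) = 0)"
        using False by (simp add: f_def)
    qed
    also have "\<dots> = (\<Sum>u\<in>UNIV. 1 + quad_char (k * (u*(u - 1)*(u - lam))))"
    proof (intro sum.cong refl)
      fix u :: 'a
      have "(\<Sum>v\<in>UNIV. of_bool (k*v^2 + 0*v + (- (u*(u - 1)*(u - lam))) = 0))
          = 1 + quad_char (0^2 - 4*k*(- (u*(u - 1)*(u - lam))))"
        by (rule count_quadratic_roots[OF two_neq_zero assms])
      also have "0^2 - 4*k*(- (u*(u - 1)*(u - lam))) = 2^2 * (k * (u*(u - 1)*(u - lam)))"
        by (simp add: algebra_simps)
      also have "quad_char \<dots> = quad_char (k * (u*(u - 1)*(u - lam)))"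
        by (rule quad_char_square_mult[OF two_neq_zero])
      finally show "(\<Sum>v\<in>UNIV. of_bool (k*v^2 + 0*v + (- (u*(u - 1)*(u - lam))) = 0))
          = 1 + quad_char (k * (u*(u - 1)*(u - lam)))" .
    qed
    finally show ?thesis
      using False by (simp add: sum.distrib legendre_char_sum_def)
  qed
  have "(\<Sum>x\<in>UNIV. \<Sum>y\<in>UNIV. \<Sum>z\<in>UNIV. f x y z) = (\<Sum>z\<in>UNIV. \<Sum>x\<in>UNIV. \<Sum>y\<in>UNIV. f x y z)"
    by (rule sum3_rotate[symmetric])
  also have "\<dots> = int CARD('a) + (int CARD('a) - 1) * (int CARD('a) + legendre_char_sum k lam)"
    by (simp only: plane sum_if_zero_const)
  finally show ?thesis
    by (simp add: f_def algebra_simps)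
qed

lemma card_proj_twisted_legendre:
  fixes k lam :: 'a
  assumes "k \<noteq> 0"
  shows "int (card (proj_zeros (\<lambda>(x,y,z). k * y^2 * z - x * (x - z) * (x - lam * z))))
    = int CARD('a) + 1 + legendre_char_sum k lam"
    (is "int (card (proj_zeros ?F)) = _")
proof (rule card_proj_zeros_eq)
  fix c x y z :: 'a
  assume "c \<noteq> 0"
  have "k * (c*y)^2 * (c*z) - (c*x) * (c*x - c*z) * (c*x - lam * (c*z))
      = c^3 * (k * y^2 * z - x * (x - z) * (x - lam * z))"
    by (simp add: power2_eq_square power3_eq_cube algebra_simps)
  then show "?F (c*x, c*y, c*z) = 0 \<longleftrightarrow> ?F (x, y, z) = 0"
    using \<open>c \<noteq> 0\<close> by simp
next
  show "int (card {p. ?F p = 0}) = 1 + (int CARD('a) - 1) * (int CARD('a) + 1 + legendre_char_sum k lam)"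
    unfolding card_triples_eq_sum using count_twisted_legendre_cone[OF assms] by simp
qed simp

end

theorem mainTheorem2:
  fixes lam :: "'a::{field,finite}"
  assumes "odd CARD('a)"
    and "lam \<noteq> 0" and "lam \<noteq> 1" and "lam \<noteq> -3"
  shows "int (card (proj_zeros (\<lambda>(x,y,z). x^4 + y^4 + z^4
              - (lam + 1) * (x^2*y^2 + y^2*z^2 + z^2*x^2))))
       = 3 * int (card (proj_zeros (\<lambda>(x,y,z). (lam + 3) * y^2 * z
              - x * (x - z) * (x - lam * z))))
         - 2 * int CARD('a) - 2"
proof -
  have two: "(2::'a) \<noteq> 0"
    using assms(1) by (rule two_neq_zero_if_odd_card)
  have "lam + 3 \<noteq> 0"
    using assms(4) by (simp add: eq_neg_iff_add_eq_0)
  have "lam + 1 \<noteq> 1" "lam + 1 \<noteq> 2" "lam + 1 \<noteq> -2"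
    using assms(2-4) by (auto simp: eq_neg_iff_add_eq_0 algebra_simps)
  then have "int (card (proj_zeros (\<lambda>(x,y,z). x^4 + y^4 + z^4
              - (lam + 1) * (x^2*y^2 + y^2*z^2 + z^2*x^2))))
      = int CARD('a) + 1 + 3 * disc_char_sum (lam + 1)"
    by (rule card_proj_quartic[OF two])
  moreover have "disc_char_sum (lam + 1) = legendre_char_sum (lam + 3) lam"
    using disc_char_sum_eq_cubic_sum[OF assms(3)]
      legendre_char_sum_eq_cubic_sum[OF two \<open>lam + 3 \<noteq> 0\<close> assms(2)] by simp
  ultimately show ?thesis
    using card_proj_twisted_legendre[OF two \<open>lam + 3 \<noteq> 0\<close>, of lam] by simp
qed

end
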